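(* Let $K\ge1$ and $\gamma\in(0,1]$. For each $i\in[K]$ let $E_i$ be a nonnegative random variable with $\mathbb E[E_i]\le1$ when the $i$-th null hypothesis is true. Consider the following sequential procedure: for $t=1,\dots,K$, an index $I_t$ not previously selected is chosen, a current proxy $F^{(t)}_{I_t}\ge0$ is formed (an arbitrary nonnegative random variable, which may depend on initial proxies, on previous indicators $T_{I_1},\dots,T_{I_{t-1}}$, and on previously queried values $E_{I_s}$ with $s<t$, $T_{I_s}=1$), then $T_{I_t}$ is drawn, using fresh independent randomness, with $T_{I_t}\sim\mathrm{Bern}\big((1-\gamma(F^{(t)}_{I_t})^{-1})_+\big)$ given everything observed so far and all $E_j$, and one sets $\tilde E_{I_t}:=F^{(t)}_{I_t}$ if $T_{I_t}=0$ and $\tilde E_{I_t}:=(1-\gamma)E_{I_t}$ if $T_{I_t}=1$ (in which case $E_{I_t}$ is queried). Then each resulting $\tilde E_i$, $i\in[K]$, is a valid e-value: $\tilde E_i\ge0$ and $\mathbb E[\tilde E_i]\le1$ when the $i$-th null is true.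
   Context: $x_+=\max(x,0)$, with $(1-\gamma F^{-1})_+=0$ when $F=0$. *)

theory Defs
  imports "HOL-Probability.Probability"
begin

definition bern_prob :: "real \<Rightarrow> real \<Rightarrow> real" where
  "bern_prob \<gamma> F = (if F = 0 then 0 else max 0 (1 - \<gamma> / F))"

text \<open>Generators of the information observed after steps 1..t of the procedure:
  initial proxies Finit j (j in [K]) and, for each step s \<le> t, the selected index I s,
  the indicator T s and the queried value (E (I s) if T s, else the dummy value 0).\<close>
definition obs_sets ::
  "'a measure \<Rightarrow> nat \<Rightarrow> (nat \<Rightarrow> 'a \<Rightarrow> real) \<Rightarrow> (nat \<Rightarrow> 'a \<Rightarrow> real)
    \<Rightarrow> (nat \<Rightarrow> 'a \<Rightarrow> nat) \<Rightarrow> (nat \<Rightarrow> 'a \<Rightarrow> bool) \<Rightarrow> nat \<Rightarrow> 'a set set" where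
  "obs_sets M K Finit E I T t =
     (\<Union>j\<in>{1..K}. {Finit j -` B \<inter> space M | B. B \<in> sets borel})
   \<union> (\<Union>s\<in>{1..t}. {I s -` B \<inter> space M | B. True}
                  \<union> {T s -` B \<inter> space M | B. True}
                  \<union> {(\<lambda>\<omega>. if T s \<omega> then E (I s \<omega>) \<omega> else 0) -` B \<inter> space M | B. B \<in> sets borel})"

text \<open>Generators of the conditioning information for the draw of T at step t:
  everything observed before step t, the current index I t and proxy F t, and all E j.\<close>
definition hist_sets ::
  "'a measure \<Rightarrow> nat \<Rightarrow> (nat \<Rightarrow> 'a \<Rightarrow> real) \<Rightarrow> (nat \<Rightarrow> 'a \<Rightarrow> real)
    \<Rightarrow> (nat \<Rightarrow> 'a \<Rightarrow> nat) \<Rightarrow> (nat \<Rightarrow> 'a \<Rightarrow> real) \<Rightarrow> (nat \<Rightarrow> 'a \<Rightarrow> bool) \<Rightarrow> nat \<Rightarrow> 'a set set" where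
  "hist_sets M K Finit E I F T t =
     obs_sets M K Finit E I T (t - 1)
   \<union> {I t -` B \<inter> space M | B. True}
   \<union> {F t -` B \<inter> space M | B. B \<in> sets borel}
   \<union> (\<Union>j\<in>{1..K}. {E j -` B \<inter> space M | B. B \<in> sets borel})"

definition etilde ::
  "nat \<Rightarrow> real \<Rightarrow> (nat \<Rightarrow> 'a \<Rightarrow> real) \<Rightarrow> (nat \<Rightarrow> 'a \<Rightarrow> nat) \<Rightarrow> (nat \<Rightarrow> 'a \<Rightarrow> real)
    \<Rightarrow> (nat \<Rightarrow> 'a \<Rightarrow> bool) \<Rightarrow> nat \<Rightarrow> 'a \<Rightarrow> real" where
  "etilde K \<gamma> E I F T i \<omega> =
     (let t = (THE t. t \<in> {1..K} \<and> I t \<omega> = i)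
      in if T t \<omega> then (1 - \<gamma>) * E i \<omega> else F t \<omega>)"

end

theory Submission
  imports Defs
begin

(*
  Let H t be the sigma-algebra generated by hist_sets at step t.  The event that step t
  selects i, the value E i and the proxy F t are all H t-measurable, while given H t the
  indicator T t is Bernoulli with parameter p = (1 - \<gamma> / F t)\<^sub>+.  Integrating out T t
  therefore replaces the contribution of step t to etilde by p (1 - \<gamma>) E i + (1 - p) F t,
  which is at most (1 - \<gamma>) E i + \<gamma> because F (1 - (1 - \<gamma> / F)\<^sub>+) \<le> \<gamma>.  Since exactly
  one step selects i, the expectation of etilde is at most (1 - \<gamma>) E[E i] + \<gamma> \<le> 1.
*)

definition is_cond_prob :: "'a measure \<Rightarrow> 'a measure \<Rightarrow> 'a set \<Rightarrow> ('a \<Rightarrow> real) \<Rightarrow> bool" where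
  "is_cond_prob M H S q \<longleftrightarrow>
     (\<forall>A \<in> sets H. measure M (A \<inter> S) = (\<integral>\<omega>. indicator A \<omega> * q \<omega> \<partial>M))"

lemma integrable_indicator_mult_bounded:
  fixes q :: "'a \<Rightarrow> real"
  assumes "finite_measure M" "A \<in> sets M" "q \<in> borel_measurable M"
    and "\<And>\<omega>. \<omega> \<in> space M \<Longrightarrow> 0 \<le> q \<omega> \<and> q \<omega> \<le> 1"
  shows "integrable M (\<lambda>\<omega>. indicator A \<omega> * q \<omega>)"
proof -
  interpret finite_measure M by fact
  show ?thesis
    by (rule integrable_const_bound[where B=1]) (use assms in \<open>auto simp: indicator_def\<close>)
qed

lemma is_cond_prob_compl:
  assumes M: "finite_measure M" and H: "subalgebra M H" and S: "S \<in> sets M"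
    and q: "q \<in> borel_measurable M" "\<And>\<omega>. \<omega> \<in> space M \<Longrightarrow> 0 \<le> q \<omega> \<and> q \<omega> \<le> 1"
    and cond: "is_cond_prob M H S q"
  shows "is_cond_prob M H (space M - S) (\<lambda>\<omega>. 1 - q \<omega>)"
  unfolding is_cond_prob_def
proof
  interpret finite_measure M by fact
  fix A assume A: "A \<in> sets H"
  then have AM: "A \<in> sets M" using H by (auto simp: subalgebra_def)
  have "A \<inter> (space M - S) = A - A \<inter> S" using sets.sets_into_space[OF AM] by blast
  then have "measure M (A \<inter> (space M - S)) = measure M A - measure M (A \<inter> S)"
    using AM S by (simp add: finite_measure_Diff)
  also have "\<dots> = (\<integral>\<omega>. indicator A \<omega> \<partial>M) - (\<integral>\<omega>. indicator A \<omega> * q \<omega> \<partial>M)"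
    using cond A AM by (simp add: is_cond_prob_def)
  also have "\<dots> = (\<integral>\<omega>. indicator A \<omega> - indicator A \<omega> * q \<omega> \<partial>M)"
    using integrable_indicator_mult_bounded[OF M AM q] AM
    by (subst Bochner_Integration.integral_diff) (auto simp: emeasure_eq_measure)
  also have "\<dots> = (\<integral>\<omega>. indicator A \<omega> * (1 - q \<omega>) \<partial>M)"
    by (simp add: algebra_simps)
  finally show "measure M (A \<inter> (space M - S)) = (\<integral>\<omega>. indicator A \<omega> * (1 - q \<omega>) \<partial>M)" .
qed

lemma nn_integral_mult_indicator_cond_prob:
  assumes M: "finite_measure M" and H: "subalgebra M H" and S: "S \<in> sets M"
    and q: "q \<in> borel_measurable M" "\<And>\<omega>. \<omega> \<in> space M \<Longrightarrow> 0 \<le> q \<omega> \<and> q \<omega> \<le> 1"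
    and cond: "is_cond_prob M H S q"
    and g: "g \<in> borel_measurable H"
  shows "(\<integral>\<^sup>+\<omega>. g \<omega> * indicator S \<omega> \<partial>M) = (\<integral>\<^sup>+\<omega>. g \<omega> * ennreal (q \<omega>) \<partial>M)"
  using g
proof (induction rule: borel_measurable_induct)
  case (cong f g)
  have "space H = space M" using H by (simp add: subalgebra_def)
  then show ?case
    using cong by (metis (no_types, lifting) nn_integral_cong)
next
  case (set A)
  interpret finite_measure M by fact
  have AM: "A \<in> sets M" using H set by (auto simp: subalgebra_def)
  have "(\<integral>\<^sup>+\<omega>. indicator A \<omega> * indicator S \<omega> \<partial>M) = emeasure M (A \<inter> S)"
    using AM S by (simp flip: indicator_inter_arith)
  also have "\<dots> = ennreal (\<integral>\<omega>. indicator A \<omega> * q \<omega> \<partial>M)"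
    using cond set by (simp add: is_cond_prob_def emeasure_eq_measure)
  also have "\<dots> = (\<integral>\<^sup>+\<omega>. ennreal (indicator A \<omega> * q \<omega>) \<partial>M)"
    using integrable_indicator_mult_bounded[OF M AM q] q(2)
    by (intro nn_integral_eq_integral[symmetric]) auto
  also have "\<dots> = (\<integral>\<^sup>+\<omega>. indicator A \<omega> * ennreal (q \<omega>) \<partial>M)"
    by (intro nn_integral_cong) (auto simp: indicator_def)
  finally show ?case .
next
  case (mult u c)
  have "u \<in> borel_measurable M" using mult H by (simp add: measurable_from_subalg)
  then show ?case
    using mult S q by (simp add: mult.assoc nn_integral_cmult)
next
  case (add u v)
  have "u \<in> borel_measurable M" "v \<in> borel_measurable M"
    using add H by (simp_all add: measurable_from_subalg)
  then show ?case
    using add S q by (simp add: distrib_right nn_integral_add)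
next
  case (seq U)
  have UM: "U i \<in> borel_measurable M" for i using seq H by (simp add: measurable_from_subalg)
  have "incseq (\<lambda>i \<omega>. U i \<omega> * h \<omega>)" for h :: "'a \<Rightarrow> ennreal"
    using \<open>incseq U\<close> by (auto simp: incseq_def le_fun_def intro: mult_right_mono)
  then have "(\<integral>\<^sup>+\<omega>. (SUP i. U i \<omega> * h \<omega>) \<partial>M) = (SUP i. \<integral>\<^sup>+\<omega>. U i \<omega> * h \<omega> \<partial>M)"
    if "h \<in> borel_measurable M" for h
    using UM that by (intro nn_integral_monotone_convergence_SUP) auto
  from this[of "indicator S"] this[of "\<lambda>\<omega>. ennreal (q \<omega>)"] show ?case
    using seq S q by (simp add: SUP_apply SUP_mult_right_ennreal image_image)
qed

lemma nn_integral_if_cond_prob: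
  fixes x y :: "'a \<Rightarrow> real"
  assumes M: "finite_measure M" and H: "subalgebra M H" and S: "S \<in> sets M"
    and q: "q \<in> borel_measurable M" "\<And>\<omega>. \<omega> \<in> space M \<Longrightarrow> 0 \<le> q \<omega> \<and> q \<omega> \<le> 1"
    and cond: "is_cond_prob M H S q"
    and x: "x \<in> borel_measurable H" "\<And>\<omega>. \<omega> \<in> space M \<Longrightarrow> 0 \<le> x \<omega>"
    and y: "y \<in> borel_measurable H" "\<And>\<omega>. \<omega> \<in> space M \<Longrightarrow> 0 \<le> y \<omega>"
  shows "(\<integral>\<^sup>+\<omega>. ennreal (if \<omega> \<in> S then x \<omega> else y \<omega>) \<partial>M)
       = (\<integral>\<^sup>+\<omega>. ennreal (q \<omega> * x \<omega> + (1 - q \<omega>) * y \<omega>) \<partial>M)"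
proof -
  have S': "space M - S \<in> sets M" using S by auto
  have q': "0 \<le> 1 - q \<omega> \<and> 1 - q \<omega> \<le> 1" if "\<omega> \<in> space M" for \<omega> using q(2)[OF that] by simp
  have xM: "x \<in> borel_measurable M" and yM: "y \<in> borel_measurable M"
    using x y H by (simp_all add: measurable_from_subalg)
  have "(\<integral>\<^sup>+\<omega>. ennreal (if \<omega> \<in> S then x \<omega> else y \<omega>) \<partial>M)
      = (\<integral>\<^sup>+\<omega>. ennreal (x \<omega>) * indicator S \<omega> + ennreal (y \<omega>) * indicator (space M - S) \<omega> \<partial>M)"
    by (intro nn_integral_cong) (auto simp: indicator_def)
  also have "\<dots> = (\<integral>\<^sup>+\<omega>. ennreal (x \<omega>) * indicator S \<omega> \<partial>M)
      + (\<integral>\<^sup>+\<omega>. ennreal (y \<omega>) * indicator (space M - S) \<omega> \<partial>M)"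
    using xM yM S S' by (intro nn_integral_add) auto
  also have "\<dots> = (\<integral>\<^sup>+\<omega>. ennreal (x \<omega>) * ennreal (q \<omega>) \<partial>M)
      + (\<integral>\<^sup>+\<omega>. ennreal (y \<omega>) * ennreal (1 - q \<omega>) \<partial>M)"
    using nn_integral_mult_indicator_cond_prob[OF M H S q cond]
      nn_integral_mult_indicator_cond_prob[OF M H S' _ q' is_cond_prob_compl[OF M H S q cond]]
      x(1) y(1) q(1) by simp
  also have "\<dots> = (\<integral>\<^sup>+\<omega>. ennreal (x \<omega>) * ennreal (q \<omega>) + ennreal (y \<omega>) * ennreal (1 - q \<omega>) \<partial>M)"
    using xM yM q(1) by (intro nn_integral_add[symmetric]) auto
  also have "\<dots> = (\<integral>\<^sup>+\<omega>. ennreal (q \<omega> * x \<omega> + (1 - q \<omega>) * y \<omega>) \<partial>M)"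
    using x(2) y(2) q' by (intro nn_integral_cong) (simp add: ennreal_mult' ennreal_plus mult.commute)
  finally show ?thesis .
qed

lemma measurable_sigma_vimage_generators:
  assumes "G \<subseteq> Pow \<Omega>" "f \<in> \<Omega> \<rightarrow> space N" "\<And>B. B \<in> sets N \<Longrightarrow> f -` B \<inter> \<Omega> \<in> G"
  shows "f \<in> measurable (sigma \<Omega> G) N"
  using assms by (intro measurableI) (auto intro: sigma_sets.Basic)

lemma subalgebra_sigma:
  assumes "G \<subseteq> sets M"
  shows "subalgebra M (sigma (space M) G)"
proof -
  have "G \<subseteq> Pow (space M)" using assms sets.sets_into_space by blast
  then show ?thesis
    using assms by (simp add: subalgebra_def sets.sigma_sets_subset)
qed

lemma measurable_compose_index:
  assumes "g \<in> measurable M (count_space UNIV)" "countable J" "\<And>\<omega>. \<omega> \<in> space M \<Longrightarrow> g \<omega> \<in> J"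
    and "\<And>j. j \<in> J \<Longrightarrow> f j \<in> measurable M N"
  shows "(\<lambda>\<omega>. f (g \<omega>) \<omega>) \<in> measurable M N"
proof (rule measurable_compose_countable'[OF assms(4) _ assms(2)])
  show "g \<in> measurable M (count_space J)"
    using assms(1-3) measurable_sets[OF assms(1)]
    by (subst measurable_count_space_eq_countable) auto
qed

lemma bern_prob_nonneg: "0 \<le> bern_prob \<gamma> x"
  by (simp add: bern_prob_def)

lemma bern_prob_le_1: "0 \<le> \<gamma> \<Longrightarrow> 0 \<le> x \<Longrightarrow> bern_prob \<gamma> x \<le> 1"
  by (simp add: bern_prob_def)

lemma mult_one_minus_bern_prob_le:
  assumes "0 \<le> \<gamma>" "0 \<le> x"
  shows "x * (1 - bern_prob \<gamma> x) \<le> \<gamma>"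
proof (cases "x \<le> \<gamma>")
  case True
  then show ?thesis using assms bern_prob_le_1[OF assms] by (simp add: bern_prob_def)
next
  case False
  then have "bern_prob \<gamma> x = 1 - \<gamma> / x" using assms by (simp add: bern_prob_def field_simps)
  then show ?thesis using False assms by simp
qed

lemma borel_measurable_bern_prob:
  assumes [measurable]: "f \<in> borel_measurable M"
  shows "(\<lambda>\<omega>. bern_prob \<gamma> (f \<omega>)) \<in> borel_measurable M"
  unfolding bern_prob_def by measurable

lemma nn_integral_bern_query_le:
  fixes a e f :: "'a \<Rightarrow> real"
  assumes M: "finite_measure M" and H: "subalgebra M H" and "0 \<le> \<gamma>" "\<gamma> \<le> 1"
    and P: "{\<omega> \<in> space M. P \<omega>} \<in> sets M"
      "is_cond_prob M H {\<omega> \<in> space M. P \<omega>} (\<lambda>\<omega>. bern_prob \<gamma> (f \<omega>))"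
    and a: "a \<in> borel_measurable H" "\<And>\<omega>. \<omega> \<in> space M \<Longrightarrow> 0 \<le> a \<omega>"
    and e: "e \<in> borel_measurable H" "\<And>\<omega>. \<omega> \<in> space M \<Longrightarrow> 0 \<le> e \<omega>"
    and f: "f \<in> borel_measurable H" "\<And>\<omega>. \<omega> \<in> space M \<Longrightarrow> 0 \<le> f \<omega>"
  shows "(\<integral>\<^sup>+\<omega>. ennreal (a \<omega> * (if P \<omega> then (1 - \<gamma>) * e \<omega> else f \<omega>)) \<partial>M)
       \<le> (\<integral>\<^sup>+\<omega>. ennreal (a \<omega> * ((1 - \<gamma>) * e \<omega> + \<gamma>)) \<partial>M)"
proof -
  let ?S = "{\<omega> \<in> space M. P \<omega>}" and ?p = "\<lambda>\<omega>. bern_prob \<gamma> (f \<omega>)"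
  have p: "0 \<le> ?p \<omega> \<and> ?p \<omega> \<le> 1" if "\<omega> \<in> space M" for \<omega>
    using bern_prob_nonneg bern_prob_le_1[OF \<open>0 \<le> \<gamma>\<close> f(2)[OF that]] by blast
  have "(\<integral>\<^sup>+\<omega>. ennreal (a \<omega> * (if P \<omega> then (1 - \<gamma>) * e \<omega> else f \<omega>)) \<partial>M)
      = (\<integral>\<^sup>+\<omega>. ennreal (if \<omega> \<in> ?S then a \<omega> * ((1 - \<gamma>) * e \<omega>) else a \<omega> * f \<omega>) \<partial>M)"
    by (intro nn_integral_cong) simp
  also have "\<dots> = (\<integral>\<^sup>+\<omega>. ennreal (?p \<omega> * (a \<omega> * ((1 - \<gamma>) * e \<omega>)) + (1 - ?p \<omega>) * (a \<omega> * f \<omega>)) \<partial>M)"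
  proof (rule nn_integral_if_cond_prob[OF M H P(1) _ p P(2)])
    show "?p \<in> borel_measurable M"
      using borel_measurable_bern_prob[OF measurable_from_subalg[OF H f(1)]] .
    show "(\<lambda>\<omega>. a \<omega> * ((1 - \<gamma>) * e \<omega>)) \<in> borel_measurable H"
      using a(1) e(1) by measurable
    show "(\<lambda>\<omega>. a \<omega> * f \<omega>) \<in> borel_measurable H"
      using a(1) f(1) by measurable
    show "0 \<le> a \<omega> * ((1 - \<gamma>) * e \<omega>)" "0 \<le> a \<omega> * f \<omega>" if "\<omega> \<in> space M" for \<omega>
      using a(2)[OF that] e(2)[OF that] f(2)[OF that] \<open>\<gamma> \<le> 1\<close> by simp_all
  qed
  also have "\<dots> \<le> (\<integral>\<^sup>+\<omega>. ennreal (a \<omega> * ((1 - \<gamma>) * e \<omega> + \<gamma>)) \<partial>M)"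
  proof (intro nn_integral_mono ennreal_leI)
    fix \<omega> assume \<omega>: "\<omega> \<in> space M"
    have "?p \<omega> * ((1 - \<gamma>) * e \<omega>) \<le> (1 - \<gamma>) * e \<omega>"
      using p[OF \<omega>] e(2)[OF \<omega>] \<open>\<gamma> \<le> 1\<close> by (simp add: mult_left_le_one_le)
    moreover have "(1 - ?p \<omega>) * f \<omega> \<le> \<gamma>"
      using mult_one_minus_bern_prob_le[OF \<open>0 \<le> \<gamma>\<close> f(2)[OF \<omega>]] by (simp add: mult.commute)
    ultimately have "?p \<omega> * ((1 - \<gamma>) * e \<omega>) + (1 - ?p \<omega>) * f \<omega> \<le> (1 - \<gamma>) * e \<omega> + \<gamma>"
      by simp
    from mult_left_mono[OF this a(2)[OF \<omega>]]
    show "?p \<omega> * (a \<omega> * ((1 - \<gamma>) * e \<omega>)) + (1 - ?p \<omega>) * (a \<omega> * f \<omega>)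
        \<le> a \<omega> * ((1 - \<gamma>) * e \<omega> + \<gamma>)"
      by (simp add: algebra_simps)
  qed
  finally show ?thesis .
qed

lemma sum_of_bool_eq_the_inv_into:
  fixes f :: "'a \<Rightarrow> 'b::semiring_1"
  assumes "bij_betw h A B" "b \<in> B" "finite A"
  shows "(\<Sum>a\<in>A. of_bool (h a = b) * f a) = f (the_inv_into A h b)"
proof -
  let ?a = "the_inv_into A h b"
  have "?a \<in> A" "h ?a = b"
    using assms bij_betw_the_inv_into bij_betw_apply f_the_inv_into_f_bij_betw by metis+
  moreover have "h a = b \<Longrightarrow> a = ?a" if "a \<in> A" for a
    using assms(1) that \<open>?a \<in> A\<close> \<open>h ?a = b\<close> by (auto simp: bij_betw_def dest: inj_onD)
  ultimately have "A \<inter> {a. h a = b} = {?a}"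
    by blast
  then show ?thesis
    using assms(3) by (simp add: sum_of_bool_mult_eq)
qed

lemma etilde_eq_sum:
  assumes "bij_betw (\<lambda>t. I t \<omega>) {1..K} {1..K}" "i \<in> {1..K}"
  shows "etilde K \<gamma> E I F T i \<omega>
       = (\<Sum>t\<in>{1..K}. of_bool (I t \<omega> = i) * (if T t \<omega> then (1 - \<gamma>) * E i \<omega> else F t \<omega>))"
  using sum_of_bool_eq_the_inv_into[OF assms,
      where f = "\<lambda>t. if T t \<omega> then (1 - \<gamma>) * E i \<omega> else F t \<omega>"]
  by (simp add: etilde_def the_inv_into_def)

lemma etilde_nonneg:
  assumes "bij_betw (\<lambda>t. I t \<omega>) {1..K} {1..K}" "i \<in> {1..K}" "\<gamma> \<le> 1" "0 \<le> E i \<omega>"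
    and "\<And>t. t \<in> {1..K} \<Longrightarrow> 0 \<le> F t \<omega>"
  shows "0 \<le> etilde K \<gamma> E I F T i \<omega>"
  unfolding etilde_eq_sum[where I = I and \<omega> = \<omega>, OF assms(1,2)]
  using assms(3-) by (intro sum_nonneg) auto

lemma borel_measurable_etilde:
  assumes "\<And>\<omega>. \<omega> \<in> space M \<Longrightarrow> bij_betw (\<lambda>t. I t \<omega>) {1..K} {1..K}" "i \<in> {1..K}"
    and "E i \<in> borel_measurable M"
    and "\<And>t. t \<in> {1..K} \<Longrightarrow> I t \<in> measurable M (count_space UNIV)"
    and "\<And>t. t \<in> {1..K} \<Longrightarrow> T t \<in> measurable M (count_space UNIV)"
    and "\<And>t. t \<in> {1..K} \<Longrightarrow> F t \<in> borel_measurable M"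
  shows "etilde K \<gamma> E I F T i \<in> borel_measurable M"
proof -
  have "(\<lambda>\<omega>. \<Sum>t\<in>{1..K}. of_bool (I t \<omega> = i) * (if T t \<omega> then (1 - \<gamma>) * E i \<omega> else F t \<omega>))
      \<in> borel_measurable M"
    using assms(3-) by measurable
  then show ?thesis
    by (rule measurable_cong[THEN iffD1, rotated])
      (simp add: etilde_eq_sum[where I = I, OF assms(1,2)])
qed

lemma nn_integral_etilde_eq_sum:
  assumes "\<And>\<omega>. \<omega> \<in> space M \<Longrightarrow> bij_betw (\<lambda>t. I t \<omega>) {1..K} {1..K}" "i \<in> {1..K}" "\<gamma> \<le> 1"
    and E: "E i \<in> borel_measurable M" "\<And>\<omega>. \<omega> \<in> space M \<Longrightarrow> 0 \<le> E i \<omega>"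
    and "\<And>t. t \<in> {1..K} \<Longrightarrow> I t \<in> measurable M (count_space UNIV)"
    and "\<And>t. t \<in> {1..K} \<Longrightarrow> T t \<in> measurable M (count_space UNIV)"
    and F: "\<And>t. t \<in> {1..K} \<Longrightarrow> F t \<in> borel_measurable M"
      "\<And>t \<omega>. t \<in> {1..K} \<Longrightarrow> \<omega> \<in> space M \<Longrightarrow> 0 \<le> F t \<omega>"
  shows "(\<integral>\<^sup>+\<omega>. ennreal (etilde K \<gamma> E I F T i \<omega>) \<partial>M)
       = (\<Sum>t\<in>{1..K}. \<integral>\<^sup>+\<omega>. ennreal (of_bool (I t \<omega> = i)
                                    * (if T t \<omega> then (1 - \<gamma>) * E i \<omega> else F t \<omega>)) \<partial>M)"
proof -
  define W where "W t \<omega> = of_bool (I t \<omega> = i) * (if T t \<omega> then (1 - \<gamma>) * E i \<omega> else F t \<omega>)"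
    for t \<omega>
  have W_nonneg: "0 \<le> W t \<omega>" if "t \<in> {1..K}" "\<omega> \<in> space M" for t \<omega>
    using E(2)[OF that(2)] F(2)[OF that] \<open>\<gamma> \<le> 1\<close> by (simp add: W_def)
  have "ennreal (etilde K \<gamma> E I F T i \<omega>) = (\<Sum>t\<in>{1..K}. ennreal (W t \<omega>))"
    if "\<omega> \<in> space M" for \<omega>
    using etilde_eq_sum[where I = I and \<omega> = \<omega>, OF assms(1)[OF that] \<open>i \<in> {1..K}\<close>]
      sum_ennreal[of "{1..K}" "\<lambda>t. W t \<omega>"] W_nonneg[OF _ that]
    by (simp add: W_def del: sum_of_bool_mult_eq)
  then have "(\<integral>\<^sup>+\<omega>. ennreal (etilde K \<gamma> E I F T i \<omega>) \<partial>M)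
      = (\<integral>\<^sup>+\<omega>. (\<Sum>t\<in>{1..K}. ennreal (W t \<omega>)) \<partial>M)"
    by (rule nn_integral_cong)
  also have "\<dots> = (\<Sum>t\<in>{1..K}. \<integral>\<^sup>+\<omega>. ennreal (W t \<omega>) \<partial>M)"
    using assms(3-) by (intro nn_integral_sum) (auto simp: W_def)
  finally show ?thesis
    by (simp add: W_def)
qed

lemma sum_nn_integral_of_bool_selected:
  fixes I :: "nat \<Rightarrow> 'a \<Rightarrow> nat"
  assumes "\<And>\<omega>. \<omega> \<in> space M \<Longrightarrow> bij_betw (\<lambda>t. I t \<omega>) {1..K} {1..K}" "i \<in> {1..K}"
    and "\<And>t. t \<in> {1..K} \<Longrightarrow> I t \<in> measurable M (count_space UNIV)"
    and g: "g \<in> borel_measurable M" "\<And>\<omega>. \<omega> \<in> space M \<Longrightarrow> 0 \<le> g \<omega>"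
  shows "(\<Sum>t\<in>{1..K}. \<integral>\<^sup>+\<omega>. ennreal (of_bool (I t \<omega> = i) * g \<omega>) \<partial>M)
       = (\<integral>\<^sup>+\<omega>. ennreal (g \<omega>) \<partial>M)"
proof -
  have "(\<Sum>t\<in>{1..K}. \<integral>\<^sup>+\<omega>. ennreal (of_bool (I t \<omega> = i) * g \<omega>) \<partial>M)
      = (\<integral>\<^sup>+\<omega>. (\<Sum>t\<in>{1..K}. ennreal (of_bool (I t \<omega> = i) * g \<omega>)) \<partial>M)"
    using assms(3) g(1) by (intro nn_integral_sum[symmetric]) auto
  also have "\<dots> = (\<integral>\<^sup>+\<omega>. ennreal (g \<omega>) \<partial>M)"
  proof (intro nn_integral_cong)
    fix \<omega> assume \<omega>: "\<omega> \<in> space M"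
    have "(\<Sum>t\<in>{1..K}. of_bool (I t \<omega> = i) * g \<omega>) = g \<omega>"
      using assms(1)[OF \<omega>] \<open>i \<in> {1..K}\<close> by (rule sum_of_bool_eq_the_inv_into) simp
    then show "(\<Sum>t\<in>{1..K}. ennreal (of_bool (I t \<omega> = i) * g \<omega>)) = ennreal (g \<omega>)"
      using g(2)[OF \<omega>] by (simp add: sum_ennreal)
  qed
  finally show ?thesis .
qed

lemma nn_integral_etilde_le:
  fixes H :: "nat \<Rightarrow> 'a measure"
  assumes "prob_space M" "0 \<le> \<gamma>" "\<gamma> \<le> 1" "i \<in> {1..K}"
    and H: "\<And>t. t \<in> {1..K} \<Longrightarrow> subalgebra M (H t)"
    and E: "\<And>t. t \<in> {1..K} \<Longrightarrow> E i \<in> borel_measurable (H t)"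
      "\<And>\<omega>. \<omega> \<in> space M \<Longrightarrow> 0 \<le> E i \<omega>"
    and I: "\<And>t. t \<in> {1..K} \<Longrightarrow> I t \<in> measurable (H t) (count_space UNIV)"
      "\<And>\<omega>. \<omega> \<in> space M \<Longrightarrow> bij_betw (\<lambda>t. I t \<omega>) {1..K} {1..K}"
    and F: "\<And>t. t \<in> {1..K} \<Longrightarrow> F t \<in> borel_measurable (H t)"
      "\<And>t \<omega>. t \<in> {1..K} \<Longrightarrow> \<omega> \<in> space M \<Longrightarrow> 0 \<le> F t \<omega>"
    and T: "\<And>t. t \<in> {1..K} \<Longrightarrow> {\<omega> \<in> space M. T t \<omega>} \<in> sets M"
      "\<And>t. t \<in> {1..K} \<Longrightarrow>
         is_cond_prob M (H t) {\<omega> \<in> space M. T t \<omega>} (\<lambda>\<omega>. bern_prob \<gamma> (F t \<omega>))"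
  shows "(\<integral>\<^sup>+\<omega>. ennreal (etilde K \<gamma> E I F T i \<omega>) \<partial>M)
       \<le> ennreal (1 - \<gamma>) * (\<integral>\<^sup>+\<omega>. ennreal (E i \<omega>) \<partial>M) + ennreal \<gamma>"
proof -
  interpret prob_space M by fact
  have E_M: "E i \<in> borel_measurable M"
    using measurable_from_subalg[OF H E(1)] \<open>i \<in> {1..K}\<close> by blast
  have I_M: "I t \<in> measurable M (count_space UNIV)" and F_M: "F t \<in> borel_measurable M"
    and T_M: "T t \<in> measurable M (count_space UNIV)" if "t \<in> {1..K}" for t
    using measurable_from_subalg[OF H[OF that]] I(1)[OF that] F(1)[OF that] T(1)[OF that]
    by (auto simp: pred_def[symmetric])
  have sel_H: "(\<lambda>\<omega>. of_bool (I t \<omega> = i)) \<in> borel_measurable (H t)" if "t \<in> {1..K}" for t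
    using I(1)[OF that] by measurable
  have "(\<integral>\<^sup>+\<omega>. ennreal (etilde K \<gamma> E I F T i \<omega>) \<partial>M)
      = (\<Sum>t\<in>{1..K}. \<integral>\<^sup>+\<omega>. ennreal (of_bool (I t \<omega> = i)
                                    * (if T t \<omega> then (1 - \<gamma>) * E i \<omega> else F t \<omega>)) \<partial>M)"
    using I(2) \<open>i \<in> {1..K}\<close> \<open>\<gamma> \<le> 1\<close> E_M E(2) I_M T_M F_M F(2)
    by (rule nn_integral_etilde_eq_sum)
  also have "\<dots> \<le> (\<Sum>t\<in>{1..K}. \<integral>\<^sup>+\<omega>. ennreal (of_bool (I t \<omega> = i) * ((1 - \<gamma>) * E i \<omega> + \<gamma>)) \<partial>M)"
  proof (intro sum_mono)
    fix t assume t: "t \<in> {1..K}"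
    show "(\<integral>\<^sup>+\<omega>. ennreal (of_bool (I t \<omega> = i) * (if T t \<omega> then (1 - \<gamma>) * E i \<omega> else F t \<omega>)) \<partial>M)
        \<le> (\<integral>\<^sup>+\<omega>. ennreal (of_bool (I t \<omega> = i) * ((1 - \<gamma>) * E i \<omega> + \<gamma>)) \<partial>M)"
      using finite_measure_axioms H[OF t] \<open>0 \<le> \<gamma>\<close> \<open>\<gamma> \<le> 1\<close> T(1,2)[OF t] sel_H[OF t] _
        E(1)[OF t] E(2) F(1)[OF t] F(2)[OF t]
      by (rule nn_integral_bern_query_le) simp
  qed
  also have "\<dots> = (\<integral>\<^sup>+\<omega>. ennreal ((1 - \<gamma>) * E i \<omega> + \<gamma>) \<partial>M)"
    using I(2) \<open>i \<in> {1..K}\<close> I_M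
    by (rule sum_nn_integral_of_bool_selected) (use E_M E(2) \<open>0 \<le> \<gamma>\<close> \<open>\<gamma> \<le> 1\<close> in simp_all)
  also have "\<dots> = (\<integral>\<^sup>+\<omega>. ennreal (1 - \<gamma>) * ennreal (E i \<omega>) + ennreal \<gamma> \<partial>M)"
    using E(2) \<open>\<gamma> \<le> 1\<close> \<open>0 \<le> \<gamma>\<close>
    by (intro nn_integral_cong) (simp add: ennreal_plus ennreal_mult)
  also have "\<dots> = ennreal (1 - \<gamma>) * (\<integral>\<^sup>+\<omega>. ennreal (E i \<omega>) \<partial>M) + ennreal \<gamma>"
    using E_M by (simp add: nn_integral_add nn_integral_cmult emeasure_space_1)
  finally show ?thesis .
qed

lemma subalgebra_hist_sigma:
  assumes t: "t \<in> {1..K}"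
    and Finit: "\<And>j. j \<in> {1..K} \<Longrightarrow> Finit j \<in> borel_measurable M"
    and E: "\<And>j. j \<in> {1..K} \<Longrightarrow> E j \<in> borel_measurable M"
    and I: "\<And>s. s \<in> {1..K} \<Longrightarrow> I s \<in> measurable M (count_space UNIV)"
      "\<And>\<omega>. \<omega> \<in> space M \<Longrightarrow> bij_betw (\<lambda>s. I s \<omega>) {1..K} {1..K}"
    and T: "\<And>s. s \<in> {1..K} \<Longrightarrow> T s \<in> measurable M (count_space UNIV)"
    and F: "\<And>s. s \<in> {1..K} \<Longrightarrow> F s \<in> borel_measurable M"
  shows "subalgebra M (sigma (space M) (hist_sets M K Finit E I F T t))"
proof (rule subalgebra_sigma)
  have query: "(\<lambda>\<omega>. if T s \<omega> then E (I s \<omega>) \<omega> else 0) \<in> borel_measurable M"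
    if s: "s \<in> {1..K}" for s
  proof -
    have "I s \<omega> \<in> {1..K}" if "\<omega> \<in> space M" for \<omega>
      using bij_betwE[OF I(2)[OF that]] s by blast
    then have [measurable]: "(\<lambda>\<omega>. E (I s \<omega>) \<omega>) \<in> borel_measurable M"
      using measurable_compose_index[OF I(1)[OF s], where J = "{1..K}" and f = E] E by simp
    show ?thesis using T[OF s] by measurable
  qed
  show "hist_sets M K Finit E I F T t \<subseteq> sets M"
    unfolding hist_sets_def obs_sets_def using t
    by (auto intro!: measurable_sets[OF Finit] measurable_sets[OF E] measurable_sets[OF I(1)]
        measurable_sets[OF T] measurable_sets[OF F] measurable_sets[OF query])
qed

lemma measurable_hist_sigma:
  shows "I t \<in> measurable (sigma (space M) (hist_sets M K Finit E I F T t)) (count_space UNIV)"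
    and "F t \<in> borel_measurable (sigma (space M) (hist_sets M K Finit E I F T t))"
    and "j \<in> {1..K} \<Longrightarrow> E j \<in> borel_measurable (sigma (space M) (hist_sets M K Finit E I F T t))"
proof -
  have hist_Pow: "hist_sets M K Finit E I F T t \<subseteq> Pow (space M)"
    by (auto simp: hist_sets_def obs_sets_def)
  show "I t \<in> measurable (sigma (space M) (hist_sets M K Finit E I F T t)) (count_space UNIV)"
    "F t \<in> borel_measurable (sigma (space M) (hist_sets M K Finit E I F T t))"
    by (rule measurable_sigma_vimage_generators[OF hist_Pow]; auto simp: hist_sets_def)+
  show "E j \<in> borel_measurable (sigma (space M) (hist_sets M K Finit E I F T t))"
    if "j \<in> {1..K}"
    using that by (intro measurable_sigma_vimage_generators[OF hist_Pow]) (auto simp: hist_sets_def)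
qed

theorem proposition8:
  fixes M :: "'a measure" and K :: nat and \<gamma> :: real
    and E :: "nat \<Rightarrow> 'a \<Rightarrow> real"
    and Finit :: "nat \<Rightarrow> 'a \<Rightarrow> real"
    and I :: "nat \<Rightarrow> 'a \<Rightarrow> nat"
    and F :: "nat \<Rightarrow> 'a \<Rightarrow> real"
    and T :: "nat \<Rightarrow> 'a \<Rightarrow> bool"
  assumes "prob_space M"
    and "K \<ge> 1" and "0 < \<gamma>" and "\<gamma> \<le> 1"
    and E_meas: "\<And>j. j \<in> {1..K} \<Longrightarrow> E j \<in> borel_measurable M"
    and E_nonneg: "\<And>j \<omega>. j \<in> {1..K} \<Longrightarrow> \<omega> \<in> space M \<Longrightarrow> E j \<omega> \<ge> 0"
    and Finit_meas: "\<And>j. j \<in> {1..K} \<Longrightarrow> Finit j \<in> borel_measurable M"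
    and I_meas: "\<And>t. t \<in> {1..K} \<Longrightarrow> I t \<in> measurable M (count_space UNIV)"
    and T_meas: "\<And>t. t \<in> {1..K} \<Longrightarrow> T t \<in> measurable M (count_space UNIV)"
    and F_meas: "\<And>t. t \<in> {1..K} \<Longrightarrow> F t \<in> borel_measurable M"
    and I_perm: "\<And>\<omega>. \<omega> \<in> space M \<Longrightarrow> bij_betw (\<lambda>t. I t \<omega>) {1..K} {1..K}"
    and I_adapted: "\<And>t. t \<in> {1..K} \<Longrightarrow>
          I t \<in> measurable (sigma (space M) (obs_sets M K Finit E I T (t - 1))) (count_space UNIV)"
    and F_adapted: "\<And>t. t \<in> {1..K} \<Longrightarrow>
          F t \<in> borel_measurable (sigma (space M) (obs_sets M K Finit E I T (t - 1)))"
    and F_nonneg: "\<And>t \<omega>. t \<in> {1..K} \<Longrightarrow> \<omega> \<in> space M \<Longrightarrow> F t \<omega> \<ge> 0"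
    and T_bern: "\<And>t A. t \<in> {1..K} \<Longrightarrow> A \<in> sets (sigma (space M) (hist_sets M K Finit E I F T t)) \<Longrightarrow>
          measure M (A \<inter> {\<omega> \<in> space M. T t \<omega>})
            = (\<integral>\<omega>. indicator A \<omega> * bern_prob \<gamma> (F t \<omega>) \<partial>M)"
  shows "\<forall>i \<in> {1..K}.
           etilde K \<gamma> E I F T i \<in> borel_measurable M
         \<and> (\<forall>\<omega> \<in> space M. etilde K \<gamma> E I F T i \<omega> \<ge> 0)
         \<and> ((\<integral>\<^sup>+ \<omega>. ennreal (E i \<omega>) \<partial>M) \<le> 1
              \<longrightarrow> (\<integral>\<^sup>+ \<omega>. ennreal (etilde K \<gamma> E I F T i \<omega>) \<partial>M) \<le> 1)"
proof -
  define H where "H t = sigma (space M) (hist_sets M K Finit E I F T t)" for t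
  have H_sub: "subalgebra M (H t)" if "t \<in> {1..K}" for t
    unfolding H_def using that Finit_meas E_meas I_meas I_perm T_meas F_meas
    by (rule subalgebra_hist_sigma)
  have H_meas: "I t \<in> measurable (H t) (count_space UNIV)" "F t \<in> borel_measurable (H t)"
    "j \<in> {1..K} \<Longrightarrow> E j \<in> borel_measurable (H t)" for t j
    unfolding H_def by (fact measurable_hist_sigma)+
  have T_sets: "{\<omega> \<in> space M. T t \<omega>} \<in> sets M" if "t \<in> {1..K}" for t
    using T_meas[OF that] by (simp add: pred_def[symmetric])
  have T_cond: "is_cond_prob M (H t) {\<omega> \<in> space M. T t \<omega>} (\<lambda>\<omega>. bern_prob \<gamma> (F t \<omega>))"
    if "t \<in> {1..K}" for t
    using T_bern[OF that] by (simp add: is_cond_prob_def H_def)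
  show ?thesis
  proof (intro ballI conjI impI)
    fix i assume i: "i \<in> {1..K}"
    show "etilde K \<gamma> E I F T i \<in> borel_measurable M"
      using I_perm i E_meas[OF i] I_meas T_meas F_meas by (rule borel_measurable_etilde)
    show "0 \<le> etilde K \<gamma> E I F T i \<omega>" if "\<omega> \<in> space M" for \<omega>
      using that I_perm i \<open>\<gamma> \<le> 1\<close> E_nonneg[OF i] F_nonneg by (auto intro!: etilde_nonneg)
    assume E_i: "(\<integral>\<^sup>+\<omega>. ennreal (E i \<omega>) \<partial>M) \<le> 1"
    have "(\<integral>\<^sup>+\<omega>. ennreal (etilde K \<gamma> E I F T i \<omega>) \<partial>M)
        \<le> ennreal (1 - \<gamma>) * (\<integral>\<^sup>+\<omega>. ennreal (E i \<omega>) \<partial>M) + ennreal \<gamma>"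
      using \<open>prob_space M\<close> _ \<open>\<gamma> \<le> 1\<close> i H_sub H_meas(3)[OF i] E_nonneg[OF i]
        H_meas(1) I_perm H_meas(2) F_nonneg T_sets T_cond
      by (rule nn_integral_etilde_le) (use \<open>0 < \<gamma>\<close> in simp)
    also have "\<dots> \<le> ennreal (1 - \<gamma>) * 1 + ennreal \<gamma>"
      using E_i by (intro add_mono mult_left_mono) auto
    also have "\<dots> = 1"
      using \<open>0 < \<gamma>\<close> \<open>\<gamma> \<le> 1\<close> by (simp flip: ennreal_plus)
    finally show "(\<integral>\<^sup>+\<omega>. ennreal (etilde K \<gamma> E I F T i \<omega>) \<partial>M) \<le> 1" .
  qed
qed

end
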